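(* Let $D=\{z\in\mathbb C:|z|<1\}$, $\overline D$ its closure, $I=[0,1]$, $K=\overline D\times I$, and let $B$ be the uniform algebra of all continuous functions $f:K\to\mathbb C$ such that $z\mapsto f(z,1)$ is analytic on $D$. Let $A=\{f\in B: f(0,1)=0\}$. Then the character space $\mathcal M(A)$ consists exactly of the evaluation functionals $\chi_x:f\mapsto f(x)$ at points $x\in K\setminus\{(0,1)\}$, and the Shilov boundary of $A$ equals $\mathcal M(A)$. *)

theory Defs
  imports "HOL-Analysis.Analysis"
begin

definition Kset :: "(complex \<times> real) set" where
  "Kset = cball 0 1 \<times> {0..1}"

text \<open>The uniform algebra B, realised as functions on K (extended by 0 outside K,
  so that elements of B correspond exactly to functions K -> C).\<close>
definition Balg :: "(complex \<times> real \<Rightarrow> complex) set" where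
  "Balg = {f. continuous_on Kset f \<and> (\<lambda>z. f (z, 1)) analytic_on ball 0 1
              \<and> (\<forall>x. x \<notin> Kset \<longrightarrow> f x = 0)}"

definition Aalg :: "(complex \<times> real \<Rightarrow> complex) set" where
  "Aalg = {f \<in> Balg. f (0, 1) = 0}"

definition character :: "('a \<Rightarrow> complex) set \<Rightarrow> (('a \<Rightarrow> complex) \<Rightarrow> complex) \<Rightarrow> bool" where
  "character A \<phi> \<longleftrightarrow>
     (\<forall>f\<in>A. \<forall>g\<in>A. \<phi> (\<lambda>x. f x + g x) = \<phi> f + \<phi> g) \<and>
     (\<forall>c. \<forall>f\<in>A. \<phi> (\<lambda>x. c * f x) = c * \<phi> f) \<and>
     (\<forall>f\<in>A. \<forall>g\<in>A. \<phi> (\<lambda>x. f x * g x) = \<phi> f * \<phi> g) \<and>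
     (\<exists>f\<in>A. \<phi> f \<noteq> 0)"

definition char_space :: "('a \<Rightarrow> complex) set \<Rightarrow> (('a \<Rightarrow> complex) \<Rightarrow> complex) set" where
  "char_space A = {\<phi> \<in> extensional A. character A \<phi>}"

definition gelfand_topology :: "('a \<Rightarrow> complex) set \<Rightarrow> (('a \<Rightarrow> complex) \<Rightarrow> complex) topology" where
  "gelfand_topology A = topology_generated_by
     {{\<phi> \<in> char_space A. \<phi> f \<in> U} | f U. f \<in> A \<and> open U}"

definition is_boundary :: "('a \<Rightarrow> complex) set \<Rightarrow> (('a \<Rightarrow> complex) \<Rightarrow> complex) set \<Rightarrow> bool" where
  "is_boundary A S \<longleftrightarrow> S \<subseteq> char_space A \<and>
     (\<forall>f\<in>A. (SUP \<phi>\<in>S. ereal (cmod (\<phi> f))) = (SUP \<phi>\<in>char_space A. ereal (cmod (\<phi> f))))"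

definition shilov_boundary :: "('a \<Rightarrow> complex) set \<Rightarrow> (('a \<Rightarrow> complex) \<Rightarrow> complex) set" where
  "shilov_boundary A = \<Inter> {S. is_boundary A S \<and> closedin (gelfand_topology A) S}"

end

(*
  A character of A is nonzero on some g in A, so f |-> phi(f g) / phi(g) extends it to a
  character of B; it therefore suffices to show that every character psi of B is a point
  evaluation on K (the point is not (0,1), where g vanishes).

  If psi kills P_1, ..., P_n in B whose conjugates also lie in B, the P_i have a common zero
  on K, since otherwise the sum of the |P_i|^2 would be invertible in B.  Put a = psi(z) and
  s = psi(t).  If s <> 1, the functions (1 - t)(f - psi f), (1 - t)(z - a) and t - s are of
  this kind and their common zero is (a, s).  If s = 1, psi kills every function vanishing
  on the top disc, so psi f depends only on f(., 1); the dilations f(r ., 1) are holomorphic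
  on a disc of radius 1/r, hence divisible by z - a in B, so psi maps them to f(r a, 1), and
  letting r -> 1 gives psi f = f(a, 1).

  Since x |-> chi_x is
  continuous into the Gelfand topology, a closed boundary missing chi_x misses all chi_y for
  y near x, which a bump function supported near x and vanishing on the top disc forbids.
*)

theory Submission
  imports Defs "HOL-Complex_Analysis.Cauchy_Integral_Formula"
begin

locale function_algebra =
  fixes A :: "('a \<Rightarrow> complex) set"
  assumes zero_closed: "(\<lambda>x. 0) \<in> A"
    and add_closed: "f \<in> A \<Longrightarrow> g \<in> A \<Longrightarrow> (\<lambda>x. f x + g x) \<in> A"
    and scale_closed: "f \<in> A \<Longrightarrow> (\<lambda>x. c * f x) \<in> A"
    and mult_closed: "f \<in> A \<Longrightarrow> g \<in> A \<Longrightarrow> (\<lambda>x. f x * g x) \<in> A"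
begin

lemma nonempty: "A \<noteq> {}"
  using zero_closed by blast

lemma diff_closed: "f \<in> A \<Longrightarrow> g \<in> A \<Longrightarrow> (\<lambda>x. f x - g x) \<in> A"
  using add_closed[of f "\<lambda>x. (-1) * g x"] scale_closed[of g "-1"] by simp

lemma sum_closed: "finite I \<Longrightarrow> (\<And>i. i \<in> I \<Longrightarrow> g i \<in> A) \<Longrightarrow> (\<lambda>x. \<Sum>i\<in>I. g i x) \<in> A"
  by (induction I rule: finite_induct) (auto intro: zero_closed add_closed)

context
  fixes \<phi> assumes \<phi>: "character A \<phi>"
begin

lemma character_add: "f \<in> A \<Longrightarrow> g \<in> A \<Longrightarrow> \<phi> (\<lambda>x. f x + g x) = \<phi> f + \<phi> g"
  and character_scale: "f \<in> A \<Longrightarrow> \<phi> (\<lambda>x. c * f x) = c * \<phi> f"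
  and character_mult: "f \<in> A \<Longrightarrow> g \<in> A \<Longrightarrow> \<phi> (\<lambda>x. f x * g x) = \<phi> f * \<phi> g"
  using \<phi> by (auto simp: character_def)

lemma character_zero: "\<phi> (\<lambda>x. 0) = 0"
  using character_scale[OF zero_closed, of 0] by simp

lemma character_diff: "f \<in> A \<Longrightarrow> g \<in> A \<Longrightarrow> \<phi> (\<lambda>x. f x - g x) = \<phi> f - \<phi> g"
  using character_add[of f "\<lambda>x. (-1) * g x"] character_scale[of g "-1"] scale_closed[of g "-1"]
  by simp

lemma character_sum:
  "finite I \<Longrightarrow> (\<And>i. i \<in> I \<Longrightarrow> g i \<in> A) \<Longrightarrow> \<phi> (\<lambda>x. \<Sum>i\<in>I. g i x) = (\<Sum>i\<in>I. \<phi> (g i))"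
  by (induction I rule: finite_induct) (auto simp: character_zero character_add sum_closed)

context
  fixes e assumes e: "e \<in> A" and unit: "\<And>f. f \<in> A \<Longrightarrow> (\<lambda>x. e x * f x) = f"
begin

lemma character_unit: "\<phi> e = 1"
proof -
  obtain f where f: "f \<in> A" "\<phi> f \<noteq> 0"
    using \<phi> by (auto simp: character_def)
  then have "\<phi> e * \<phi> f = \<phi> f"
    using character_mult[OF e f(1)] unit by simp
  with f(2) show ?thesis by simp
qed

lemma character_shift: "f \<in> A \<Longrightarrow> \<phi> (\<lambda>x. f x - c * e x) = \<phi> f - c"
  using character_diff[OF _ scale_closed[OF e]] character_scale[OF e] character_unit by simp

lemma character_invertible:
  assumes "h \<in> A" "h' \<in> A" "(\<lambda>x. h x * h' x) = e"
  shows "\<phi> h \<noteq> 0"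
  using character_mult[OF assms(1,2)] assms(3) character_unit by auto

end

end

lemma character_extend_from_ideal:
  assumes "I \<subseteq> A" and ideal: "\<And>f g. f \<in> A \<Longrightarrow> g \<in> I \<Longrightarrow> (\<lambda>x. f x * g x) \<in> I"
    and \<phi>: "character I \<phi>"
  shows "\<exists>\<psi>. character A \<psi> \<and> (\<forall>f\<in>I. \<psi> f = \<phi> f)"
proof -
  have add: "\<And>f g. f \<in> I \<Longrightarrow> g \<in> I \<Longrightarrow> \<phi> (\<lambda>x. f x + g x) = \<phi> f + \<phi> g"
    and scale: "\<And>c f. f \<in> I \<Longrightarrow> \<phi> (\<lambda>x. c * f x) = c * \<phi> f"
    and mult: "\<And>f g. f \<in> I \<Longrightarrow> g \<in> I \<Longrightarrow> \<phi> (\<lambda>x. f x * g x) = \<phi> f * \<phi> g"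
    using \<phi> by (auto simp: character_def)
  obtain g where g: "g \<in> I" "\<phi> g \<noteq> 0"
    using \<phi> by (auto simp: character_def)
  define \<psi> where "\<psi> f = \<phi> (\<lambda>x. f x * g x) / \<phi> g" for f
  have \<psi>_on_I: "\<psi> f = \<phi> f" if "f \<in> I" for f
    using mult[OF that g(1)] g(2) by (simp add: \<psi>_def)
  have "character A \<psi>"
    unfolding character_def
  proof (intro conjI ballI allI)
    fix f h assume f: "f \<in> A" and h: "h \<in> A"
    have "(\<lambda>x. (f x + h x) * g x) = (\<lambda>x. f x * g x + h x * g x)"
      by (simp add: algebra_simps)
    then show "\<psi> (\<lambda>x. f x + h x) = \<psi> f + \<psi> h"
      using add[OF ideal[OF f g(1)] ideal[OF h g(1)]] by (simp add: \<psi>_def add_divide_distrib)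
    have "\<phi> (\<lambda>x. f x * g x) * \<phi> (\<lambda>x. h x * g x) = \<phi> (\<lambda>x. (f x * h x * g x) * g x)"
      using mult[OF ideal[OF f g(1)] ideal[OF h g(1)]] by (simp add: algebra_simps)
    also have "\<dots> = \<phi> (\<lambda>x. f x * h x * g x) * \<phi> g"
      using mult[OF ideal[OF mult_closed[OF f h] g(1)] g(1)] by simp
    finally show "\<psi> (\<lambda>x. f x * h x) = \<psi> f * \<psi> h"
      using g(2) by (simp add: \<psi>_def field_simps power2_eq_square)
  next
    fix c f assume f: "f \<in> A"
    have "(\<lambda>x. c * f x * g x) = (\<lambda>x. c * (f x * g x))"
      by (simp add: algebra_simps)
    then show "\<psi> (\<lambda>x. c * f x) = c * \<psi> f"
      using scale[OF ideal[OF f g(1)]] by (simp add: \<psi>_def)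
  next
    show "\<exists>f\<in>A. \<psi> f \<noteq> 0"
      using g assms(1) \<psi>_on_I by (intro bexI[of _ g]) auto
  qed
  with \<psi>_on_I show ?thesis by blast
qed

end


lemma uniform_approx_by_dilation:
  fixes g :: "'a::euclidean_space \<Rightarrow> 'b::metric_space"
  assumes g: "continuous_on (cball 0 1) g" and "e > 0"
  shows "\<exists>r. 0 < r \<and> r < 1 \<and> (\<forall>z\<in>cball 0 1. dist (g (r *\<^sub>R z)) (g z) < e)"
proof -
  have "uniformly_continuous_on (cball 0 1) g"
    using g by (rule compact_uniformly_continuous) simp
  then obtain d where d: "d > 0"
    and close: "\<And>z z'. z \<in> cball 0 1 \<Longrightarrow> z' \<in> cball 0 1 \<Longrightarrow> dist z' z < d \<Longrightarrow> dist (g z') (g z) < e"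
    unfolding uniformly_continuous_on_def using \<open>e > 0\<close> by metis
  define r where "r = max (1/2) (1 - d/2)"
  have r: "0 < r" "r < 1" "1 - r < d"
    using d by (auto simp: r_def)
  have "dist (g (r *\<^sub>R z)) (g z) < e" if z: "z \<in> cball 0 1" for z
  proof (rule close[OF z])
    show "r *\<^sub>R z \<in> cball 0 1"
      using z r by (auto intro: mult_le_one)
    have "dist (r *\<^sub>R z) z = norm ((r - 1) *\<^sub>R z)"
      by (simp add: dist_norm algebra_simps)
    also have "\<dots> = (1 - r) * norm z"
      using r by simp
    also have "\<dots> \<le> 1 - r"
      using z r by (simp add: mult_left_le)
    finally show "dist (r *\<^sub>R z) z < d"
      using r by linarith
  qed
  with r show ?thesis by blast
qed

lemma mem_Kset_iff: "(z, t) \<in> Kset \<longleftrightarrow> cmod z \<le> 1 \<and> 0 \<le> t \<and> t \<le> 1"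
  by (auto simp: Kset_def)

lemma fst_Kset_in_cball: "x \<in> Kset \<Longrightarrow> fst x \<in> cball 0 1"
  by (auto simp: Kset_def)

text \<open>Elements of B vanish off K, so \<open>onK g\<close> is the element of B determined by the
  values of g on K.\<close>
definition onK :: "(complex \<times> real \<Rightarrow> complex) \<Rightarrow> complex \<times> real \<Rightarrow> complex" where
  "onK g x = (if x \<in> Kset then g x else 0)"

lemma onK_in_Balg:
  assumes "continuous_on Kset g" "(\<lambda>z. g (z, 1)) holomorphic_on ball 0 1"
  shows "onK g \<in> Balg"
proof -
  have "continuous_on Kset (onK g)"
    using assms(1) by (rule continuous_on_eq) (simp add: onK_def)
  moreover have "(\<lambda>z. onK g (z, 1)) holomorphic_on ball 0 1"
    using assms(2) by (rule holomorphic_transform) (simp add: onK_def mem_Kset_iff)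
  ultimately show ?thesis
    by (simp add: Balg_def onK_def analytic_on_open)
qed

lemma BalgD:
  assumes "f \<in> Balg"
  shows "continuous_on Kset f" "(\<lambda>z. f (z, 1)) holomorphic_on ball 0 1" "onK f = f"
    "x \<notin> Kset \<Longrightarrow> f x = 0"
  using assms by (auto simp: Balg_def analytic_on_open onK_def simp del: split_paired_All)

interpretation Balg: function_algebra Balg
  by unfold_locales (auto simp: Balg_def intro!: continuous_intros analytic_intros)

definition "oneK = onK (\<lambda>_. 1)"
definition "zK = onK fst"
definition "tK = onK (\<lambda>x. of_real (snd x))"

lemma oneK_in_Balg: "oneK \<in> Balg"
  and zK_in_Balg: "zK \<in> Balg"
  and tK_in_Balg: "tK \<in> Balg"
  unfolding oneK_def zK_def tK_def
  by (auto intro!: onK_in_Balg continuous_intros holomorphic_intros)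

lemma oneK_mult: "f \<in> Balg \<Longrightarrow> (\<lambda>x. oneK x * f x) = f"
  by (auto simp: oneK_def onK_def Balg_def)

lemma Balg_inverse:
  assumes h: "h \<in> Balg" and nz: "\<And>x. x \<in> Kset \<Longrightarrow> h x \<noteq> 0"
  shows "onK (\<lambda>x. 1 / h x) \<in> Balg" "(\<lambda>x. h x * onK (\<lambda>x. 1 / h x) x) = oneK"
proof -
  show "onK (\<lambda>x. 1 / h x) \<in> Balg"
    using BalgD(1,2)[OF h] nz
    by (intro onK_in_Balg continuous_on_divide holomorphic_on_divide)
      (auto intro: continuous_intros holomorphic_intros simp: mem_Kset_iff)
  show "(\<lambda>x. h x * onK (\<lambda>x. 1 / h x) x) = oneK"
    using nz by (auto simp: onK_def oneK_def)
qed

lemma Balg_cnj_of_constant_on_top: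
  assumes f: "f \<in> Balg" and top: "\<And>z. z \<in> ball 0 1 \<Longrightarrow> f (z, 1) = c"
  shows "(\<lambda>x. cnj (f x)) \<in> Balg"
proof -
  have "onK (\<lambda>x. cnj (f x)) \<in> Balg"
  proof (rule onK_in_Balg)
    show "continuous_on Kset (\<lambda>x. cnj (f x))"
      using BalgD(1)[OF f] by (intro continuous_intros)
    show "(\<lambda>z. cnj (f (z, 1))) holomorphic_on ball 0 1"
      by (rule holomorphic_transform[of "\<lambda>_. cnj c"]) (auto simp: top)
  qed
  moreover have "onK (\<lambda>x. cnj (f x)) = (\<lambda>x. cnj (f x))"
    using BalgD(4)[OF f] by (auto simp: onK_def)
  ultimately show ?thesis by simp
qed

lemma Balg_holomorphic_on_disc:
  assumes g: "g holomorphic_on S" "open S" and S: "cball 0 1 \<subseteq> S"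
  shows "onK (\<lambda>x. g (fst x)) \<in> Balg"
proof (rule onK_in_Balg)
  have "continuous_on (cball 0 1) g"
    using holomorphic_on_imp_continuous_on[OF g(1)] S by (rule continuous_on_subset)
  moreover have "fst ` Kset \<subseteq> cball 0 1"
    using fst_Kset_in_cball by blast
  ultimately show "continuous_on Kset (\<lambda>x. g (fst x))"
    using continuous_on_compose2 continuous_on_fst[OF continuous_on_id] by blast
  have "ball 0 1 \<subseteq> S"
    using S ball_subset_cball by blast
  then show "(\<lambda>z. g (fst (z, 1::real))) holomorphic_on ball 0 1"
    using holomorphic_on_subset[OF g(1)] by simp
qed

lemma Balg_continuous_on_top:
  assumes f: "f \<in> Balg"
  shows "continuous_on (cball 0 1) (\<lambda>z. f (z, 1))"
proof -
  have "continuous_on (cball 0 1) (\<lambda>z::complex. (z, 1::real))" "(\<lambda>z. (z, 1::real)) ` cball 0 1 \<subseteq> Kset"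
    by (auto intro!: continuous_intros simp: mem_Kset_iff)
  then show ?thesis
    using continuous_on_compose2[OF BalgD(1)[OF f]] by blast
qed

lemma Balg_top_extension:
  assumes f: "f \<in> Balg"
  shows "onK (\<lambda>x. f (fst x, 1)) \<in> Balg"
proof (rule onK_in_Balg)
  show "continuous_on Kset (\<lambda>x. f (fst x, 1))"
    using continuous_on_compose2[OF Balg_continuous_on_top[OF f] continuous_on_fst[OF continuous_on_id]]
      fst_Kset_in_cball by blast
  show "(\<lambda>z. f (fst (z, 1::real), 1)) holomorphic_on ball 0 1"
    using BalgD(2)[OF f] by simp
qed

lemma cball_subset_ball_divide:
  assumes "0 < r" "r < 1"
  shows "cball 0 1 \<subseteq> ball (0::'a::real_normed_vector) (1 / r)"
proof
  fix z :: 'a assume "z \<in> cball 0 1"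
  then have "r * norm z \<le> r"
    using assms by (simp add: mult_left_le)
  with assms have "r * norm z < 1"
    by linarith
  then show "z \<in> ball 0 (1 / r)"
    using assms by (simp add: field_simps)
qed

lemma Balg_dilation_holomorphic:
  assumes f: "f \<in> Balg" and r: "0 < r"
  shows "(\<lambda>z. f (r *\<^sub>R z, 1)) holomorphic_on ball 0 (1 / r)"
proof -
  have "((\<lambda>z. f (z, 1)) \<circ> (\<lambda>z. r *\<^sub>R z)) holomorphic_on ball 0 (1 / r)"
    using BalgD(2)[OF f] r by (intro holomorphic_on_compose_gen holomorphic_intros) (auto simp: field_simps)
  then show ?thesis
    by (simp add: o_def)
qed

context
  fixes \<psi> assumes \<psi>: "character Balg \<psi>"
begin

lemma Balg_character_oneK: "\<psi> oneK = 1"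
  using Balg.character_unit[OF \<psi> oneK_in_Balg oneK_mult] .

lemma Balg_character_shift: "f \<in> Balg \<Longrightarrow> \<psi> (\<lambda>x. f x - c * oneK x) = \<psi> f - c"
  using Balg.character_shift[OF \<psi> oneK_in_Balg oneK_mult] .

lemma Balg_character_range:
  assumes h: "h \<in> Balg"
  shows "\<exists>x\<in>Kset. h x = \<psi> h"
proof (rule ccontr)
  assume "\<not> ?thesis"
  then have nz: "\<And>x. x \<in> Kset \<Longrightarrow> h x - \<psi> h * oneK x \<noteq> 0"
    by (auto simp: oneK_def onK_def)
  have h': "(\<lambda>x. h x - \<psi> h * oneK x) \<in> Balg"
    using h by (intro Balg.diff_closed Balg.scale_closed oneK_in_Balg)
  have "\<psi> (\<lambda>x. h x - \<psi> h * oneK x) \<noteq> 0"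
    using Balg_inverse[OF h' nz]
    by (intro Balg.character_invertible[OF \<psi> oneK_in_Balg oneK_mult h']) auto
  with Balg_character_shift[OF h] show False by simp
qed

lemma Balg_character_zK: "\<psi> zK \<in> cball 0 1"
  using Balg_character_range[OF zK_in_Balg] by (auto simp: zK_def onK_def mem_Kset_iff)

lemma Balg_character_common_zero:
  assumes F: "finite F" "\<And>P. P \<in> F \<Longrightarrow> P \<in> Balg \<and> (\<lambda>x. cnj (P x)) \<in> Balg \<and> \<psi> P = 0"
  shows "\<exists>x\<in>Kset. \<forall>P\<in>F. P x = 0"
proof -
  define G where "G x = (\<Sum>P\<in>F. P x * cnj (P x))" for x
  have G: "G \<in> Balg"
    unfolding G_def using F by (intro Balg.sum_closed Balg.mult_closed) auto
  have "\<psi> G = (\<Sum>P\<in>F. \<psi> P * \<psi> (\<lambda>x. cnj (P x)))"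
    unfolding G_def using F
    by (subst Balg.character_sum[OF \<psi> F(1)])
      (auto intro: Balg.mult_closed simp: Balg.character_mult[OF \<psi>])
  also have "\<dots> = 0"
    using F by simp
  finally have "\<psi> G = 0" .
  then obtain x where x: "x \<in> Kset" "G x = 0"
    using Balg_character_range[OF G] by auto
  have "G x = of_real (\<Sum>P\<in>F. (cmod (P x))\<^sup>2)"
    by (simp only: G_def of_real_sum complex_norm_square)
  with x(2) have "(\<Sum>P\<in>F. (cmod (P x))\<^sup>2) = 0"
    by (metis of_real_eq_0_iff)
  then have "\<forall>P\<in>F. P x = 0"
    using F(1) by (simp add: sum_nonneg_eq_0_iff)
  with x(1) show ?thesis by blast
qed

text \<open>The factor \<open>1 - t\<close> kills the top disc, so all three functions below have their
  conjugates in B.\<close>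
lemma Balg_character_eval_off_top:
  assumes t1: "\<psi> tK \<noteq> 1"
  shows "\<exists>x\<in>Kset. \<forall>f\<in>Balg. \<psi> f = f x"
proof -
  define a where "a = \<psi> zK"
  obtain t where t: "\<psi> tK = of_real t"
  proof -
    obtain x where "x \<in> Kset" "tK x = \<psi> tK"
      using Balg_character_range[OF tK_in_Balg] by blast
    then show thesis
      using that[of "snd x"] by (simp add: tK_def onK_def)
  qed
  have eval: "(a, t) \<in> Kset \<and> \<psi> f = f (a, t)" if f: "f \<in> Balg" for f
  proof -
    define P1 where "P1 x = (oneK x - tK x) * (f x - \<psi> f * oneK x)" for x
    define P2 where "P2 x = (oneK x - tK x) * (zK x - a * oneK x)" for x
    define P3 where "P3 x = tK x - of_real t * oneK x" for x
    have top: "oneK (z, 1) = tK (z, 1)" for z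
      by (simp add: oneK_def tK_def onK_def)
    have in_Balg: "P1 \<in> Balg" "P2 \<in> Balg" "P3 \<in> Balg"
      unfolding P1_def P2_def P3_def using f
      by (auto intro!: Balg.mult_closed Balg.diff_closed Balg.scale_closed
          oneK_in_Balg tK_in_Balg zK_in_Balg)
    have "(\<lambda>x. cnj (P1 x)) \<in> Balg" "(\<lambda>x. cnj (P2 x)) \<in> Balg"
      by (rule Balg_cnj_of_constant_on_top[OF in_Balg(1), where c = 0], simp add: P1_def top)
         (rule Balg_cnj_of_constant_on_top[OF in_Balg(2), where c = 0], simp add: P2_def top)
    moreover have "(\<lambda>x. cnj (P3 x)) \<in> Balg"
      by (rule Balg_cnj_of_constant_on_top[OF in_Balg(3), where c = "1 - of_real t"])
        (simp add: P3_def oneK_def tK_def onK_def mem_Kset_iff)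
    moreover have "\<psi> P1 = 0" "\<psi> P2 = 0" "\<psi> P3 = 0"
      unfolding P1_def P2_def P3_def a_def using f t
      by (simp_all add: Balg.character_mult[OF \<psi>] Balg.character_diff[OF \<psi>]
          Balg.character_scale[OF \<psi>] Balg_character_oneK oneK_in_Balg tK_in_Balg zK_in_Balg
          Balg.diff_closed Balg.scale_closed)
    ultimately obtain x where x: "x \<in> Kset" "P1 x = 0" "P2 x = 0" "P3 x = 0"
      using Balg_character_common_zero[of "{P1, P2, P3}"] in_Balg by fastforce
    obtain z s where xzs: "x = (z, s)"
      by (cases x)
    have "s = t" and "1 - of_real t \<noteq> (0::complex)"
      using x(1,4) t t1 by (auto simp: xzs P3_def oneK_def tK_def onK_def)
    then show ?thesis
      using x(1-3) by (auto simp: xzs P1_def P2_def oneK_def tK_def zK_def onK_def)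
  qed
  then show ?thesis
    using oneK_in_Balg by blast
qed

lemma Balg_character_vanish_on_top:
  assumes t1: "\<psi> tK = 1" and g: "g \<in> Balg" and top: "\<And>z. cmod z \<le> 1 \<Longrightarrow> g (z, 1) = 0"
  shows "\<psi> g = 0"
proof -
  define P1 where "P1 x = g x - \<psi> g * oneK x" for x
  define P2 where "P2 x = tK x - oneK x" for x
  have in_Balg: "P1 \<in> Balg" "P2 \<in> Balg"
    unfolding P1_def P2_def using g
    by (auto intro!: Balg.diff_closed Balg.scale_closed oneK_in_Balg tK_in_Balg)
  have "(\<lambda>x. cnj (P1 x)) \<in> Balg"
    by (rule Balg_cnj_of_constant_on_top[OF in_Balg(1), where c = "- \<psi> g"])
      (simp add: P1_def top oneK_def onK_def mem_Kset_iff)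
  moreover have "(\<lambda>x. cnj (P2 x)) \<in> Balg"
    by (rule Balg_cnj_of_constant_on_top[OF in_Balg(2), where c = 0])
      (simp add: P2_def oneK_def tK_def onK_def)
  moreover have "\<psi> P1 = 0"
    using Balg_character_shift[OF g] by (simp add: P1_def[abs_def])
  moreover have "\<psi> P2 = 0"
    using Balg_character_shift[OF tK_in_Balg, of 1] t1 by (simp add: P2_def[abs_def])
  ultimately obtain x where x: "x \<in> Kset" "P1 x = 0" "P2 x = 0"
    using Balg_character_common_zero[of "{P1, P2}"] in_Balg by fastforce
  obtain z s where xzs: "x = (z, s)"
    by (cases x)
  have "s = 1"
    using x(1,3) by (simp add: xzs P2_def oneK_def tK_def onK_def)
  then show ?thesis
    using x(1,2) top by (simp add: xzs P1_def oneK_def onK_def mem_Kset_iff)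
qed

lemma Balg_character_holomorphic_on_disc:
  assumes g: "g holomorphic_on S" "open S" and S: "cball 0 1 \<subseteq> S"
  shows "\<psi> (onK (\<lambda>x. g (fst x))) = g (\<psi> zK)"
proof -
  define a where "a = \<psi> zK"
  define k where "k z = (if z = a then deriv g a else (g z - g a) / (z - a))" for z
  have k: "onK (\<lambda>x. k (fst x)) \<in> Balg"
    unfolding k_def using pole_lemma_open[OF g] g(2) S by (rule Balg_holomorphic_on_disc)
  have zK_a: "(\<lambda>x. zK x - a * oneK x) \<in> Balg" "\<psi> (\<lambda>x. zK x - a * oneK x) = 0"
    by (auto intro!: Balg.diff_closed Balg.scale_closed oneK_in_Balg zK_in_Balg
        simp: Balg_character_shift[OF zK_in_Balg] a_def)
  define P where "P x = (zK x - a * oneK x) * onK (\<lambda>x. k (fst x)) x" for x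
  have P: "P \<in> Balg" "\<psi> P = 0"
    unfolding P_def using Balg.mult_closed[OF zK_a(1) k] Balg.character_mult[OF \<psi> zK_a(1) k] zK_a(2)
    by simp_all
  have "onK (\<lambda>x. g (fst x)) = (\<lambda>x. P x + g a * oneK x)"
    by (auto simp: fun_eq_iff onK_def zK_def oneK_def k_def P_def)
  moreover have "\<psi> (\<lambda>x. P x + g a * oneK x) = g a"
    using P by (simp add: Balg.character_add[OF \<psi>] Balg.character_scale[OF \<psi>]
        Balg.scale_closed Balg_character_oneK oneK_in_Balg)
  ultimately show ?thesis
    by (simp add: a_def)
qed

lemma Balg_character_top_extension:
  assumes t1: "\<psi> tK = 1" and f: "f \<in> Balg"
  shows "\<psi> (onK (\<lambda>x. f (fst x, 1))) = \<psi> f"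
proof -
  have E: "onK (\<lambda>x. f (fst x, 1)) \<in> Balg"
    using f by (rule Balg_top_extension)
  have "\<psi> (\<lambda>x. f x - onK (\<lambda>x. f (fst x, 1)) x) = 0"
    using Balg.diff_closed[OF f E]
    by (rule Balg_character_vanish_on_top[OF t1]) (simp add: onK_def mem_Kset_iff)
  then show ?thesis
    using Balg.character_diff[OF \<psi> f E] by simp
qed

lemma Balg_character_eval_top:
  assumes t1: "\<psi> tK = 1" and f: "f \<in> Balg"
  shows "\<psi> f = f (\<psi> zK, 1)"
proof -
  define a where "a = \<psi> zK"
  have a: "a \<in> cball 0 1"
    using Balg_character_zK by (simp add: a_def)
  define E where "E = onK (\<lambda>x. f (fst x, 1))"
  have E: "E \<in> Balg" "\<psi> E = \<psi> f"
    unfolding E_def using Balg_top_extension[OF f] Balg_character_top_extension[OF t1 f] by simp_all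
  have "cmod (\<psi> f - f (a, 1)) < e" if e: "e > 0" for e
  proof -
    obtain r where r: "0 < r" "r < 1"
      and close: "\<And>z. z \<in> cball 0 1 \<Longrightarrow> dist (f (r *\<^sub>R z, 1)) (f (z, 1)) < e / 2"
      using uniform_approx_by_dilation[OF Balg_continuous_on_top[OF f], of "e / 2"] e by auto
    define F where "F = onK (\<lambda>x. f (r *\<^sub>R fst x, 1))"
    have F: "F \<in> Balg" "\<psi> F = f (r *\<^sub>R a, 1)"
      unfolding F_def a_def
      using Balg_holomorphic_on_disc Balg_character_holomorphic_on_disc
        Balg_dilation_holomorphic[OF f r(1)] open_ball cball_subset_ball_divide[OF r]
      by blast+
    obtain x where x: "x \<in> Kset" "E x - F x = \<psi> f - f (r *\<^sub>R a, 1)"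
      using Balg_character_range[OF Balg.diff_closed[OF E(1) F(1)]]
      by (auto simp: Balg.character_diff[OF \<psi> E(1) F(1)] E(2) F(2))
    have "cmod (\<psi> f - f (r *\<^sub>R a, 1)) < e / 2"
      using x close[OF fst_Kset_in_cball[OF x(1)]] by (simp add: E_def F_def onK_def dist_norm norm_minus_commute)
    moreover have "cmod (f (r *\<^sub>R a, 1) - f (a, 1)) < e / 2"
      using close[OF a] by (simp add: dist_norm)
    ultimately show ?thesis
      using norm_diff_triangle_less by fastforce
  qed
  then show ?thesis
    unfolding a_def by (metis less_irrefl right_minus_eq zero_less_norm_iff)
qed

lemma Balg_character_eval: "\<exists>x\<in>Kset. \<forall>f\<in>Balg. \<psi> f = f x"
proof (cases "\<psi> tK = 1")
  case True
  then show ?thesis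
    using Balg_character_eval_top Balg_character_zK by (auto simp: mem_Kset_iff)
next
  case False
  then show ?thesis
    by (rule Balg_character_eval_off_top)
qed

end

lemma Aalg_subset_Balg: "Aalg \<subseteq> Balg"
  by (auto simp: Aalg_def)

lemma Aalg_ideal: "f \<in> Balg \<Longrightarrow> g \<in> Aalg \<Longrightarrow> (\<lambda>x. f x * g x) \<in> Aalg"
  by (simp add: Aalg_def Balg.mult_closed)

interpretation Aalg: function_algebra Aalg
proof
  fix f g c assume "f \<in> Aalg" "g \<in> Aalg"
  then show "(\<lambda>x. f x + g x) \<in> Aalg" "(\<lambda>x. c * f x) \<in> Aalg" "(\<lambda>x. f x * g x) \<in> Aalg"
    by (simp_all add: Aalg_def Balg.add_closed Balg.scale_closed Balg.mult_closed)
qed (simp add: Aalg_def Balg.zero_closed)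

lemma char_space_Aalg_eval:
  assumes \<phi>: "\<phi> \<in> char_space Aalg"
  shows "\<exists>x\<in>Kset - {(0, 1)}. \<phi> = restrict (\<lambda>f. f x) Aalg"
proof -
  have ext: "\<phi> \<in> extensional Aalg" and ch: "character Aalg \<phi>"
    using \<phi> by (auto simp: char_space_def)
  obtain \<psi> where \<psi>: "character Balg \<psi>" "\<forall>f\<in>Aalg. \<psi> f = \<phi> f"
    using Balg.character_extend_from_ideal[OF Aalg_subset_Balg Aalg_ideal ch] by blast
  obtain x where x: "x \<in> Kset" "\<forall>f\<in>Balg. \<psi> f = f x"
    using Balg_character_eval[OF \<psi>(1)] by blast
  have \<phi>_eval: "\<phi> f = f x" if "f \<in> Aalg" for f
    using that x(2) \<psi>(2) Aalg_subset_Balg by (metis subsetD)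
  obtain g where g: "g \<in> Aalg" "\<phi> g \<noteq> 0"
    using ch by (auto simp: character_def)
  have "x \<noteq> (0, 1)"
    using \<phi>_eval[OF g(1)] g by (auto simp: Aalg_def)
  moreover have "\<phi> = restrict (\<lambda>f. f x) Aalg"
    by (rule extensionalityI[OF ext restrict_extensional]) (simp add: \<phi>_eval)
  ultimately show ?thesis
    using x(1) by blast
qed

lemma eval_in_char_space_Aalg:
  assumes x: "x \<in> Kset - {(0, 1)}"
  shows "restrict (\<lambda>f. f x) Aalg \<in> char_space Aalg"
proof -
  obtain z t where xzt: "x = (z, t)"
    by (cases x)
  have "\<exists>f\<in>Aalg. f x \<noteq> 0"
  proof (cases "z = 0")
    case False
    have "zK \<in> Aalg"
      using zK_in_Balg by (simp add: Aalg_def zK_def onK_def)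
    moreover have "zK x \<noteq> 0"
      using x False by (simp add: xzt zK_def onK_def)
    ultimately show ?thesis by blast
  next
    case True
    have "(\<lambda>y. oneK y - tK y) \<in> Aalg"
      using Balg.diff_closed[OF oneK_in_Balg tK_in_Balg]
      by (simp add: Aalg_def oneK_def tK_def onK_def)
    moreover have "oneK x - tK x \<noteq> 0"
      using x True by (simp add: xzt oneK_def tK_def onK_def)
    ultimately show ?thesis
      by (intro bexI[of _ "\<lambda>y. oneK y - tK y"])
  qed
  then show ?thesis
    unfolding char_space_def character_def
    by (simp add: Aalg.add_closed Aalg.scale_closed Aalg.mult_closed)
qed

lemma topspace_gelfand_topology:
  assumes "A \<noteq> {}"
  shows "topspace (gelfand_topology A) = char_space A"
proof -
  obtain f where "f \<in> A"
    using assms by blast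
  then have "char_space A \<in> {{\<phi> \<in> char_space A. \<phi> f \<in> U} | f U. f \<in> A \<and> open U}"
    by (intro CollectI exI[of _ f] exI[of _ UNIV]) auto
  then show ?thesis
    unfolding gelfand_topology_def topology_generated_by_topspace by blast
qed

lemma continuous_map_eval_gelfand_topology:
  "continuous_map (top_of_set (Kset - {(0, 1)})) (gelfand_topology Aalg) (\<lambda>x. restrict (\<lambda>f. f x) Aalg)"
  unfolding gelfand_topology_def
proof (rule continuous_on_generated_topo)
  let ?K = "Kset - {(0, 1)}"
  fix U assume "U \<in> {{\<phi> \<in> char_space Aalg. \<phi> f \<in> V} | f V. f \<in> Aalg \<and> open V}"
  then obtain f V where U: "U = {\<phi> \<in> char_space Aalg. \<phi> f \<in> V}" and f: "f \<in> Aalg" and V: "open V"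
    by blast
  have "continuous_on ?K f"
    using BalgD(1) f Aalg_subset_Balg continuous_on_subset by blast
  then have "openin (top_of_set ?K) (?K \<inter> f -` V)"
    using V by (rule continuous_openin_preimage_gen)
  moreover have "(\<lambda>x. restrict (\<lambda>f. f x) Aalg) -` U \<inter> topspace (top_of_set ?K) = ?K \<inter> f -` V"
    using U f eval_in_char_space_Aalg by auto
  ultimately show "openin (top_of_set ?K) ((\<lambda>x. restrict (\<lambda>f. f x) Aalg) -` U \<inter> topspace (top_of_set ?K))"
    by simp
next
  have "\<Union> {{\<phi> \<in> char_space Aalg. \<phi> f \<in> U} | f U. f \<in> Aalg \<and> open U} = char_space Aalg"
    using topspace_gelfand_topology[OF Aalg.nonempty] by (simp add: gelfand_topology_def)
  then show "(\<lambda>x. restrict (\<lambda>f. f x) Aalg) ` topspace (top_of_set (Kset - {(0, 1)}))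
      \<subseteq> \<Union> {{\<phi> \<in> char_space Aalg. \<phi> f \<in> U} | f U. f \<in> Aalg \<and> open U}"
    using eval_in_char_space_Aalg by (intro image_subsetI) simp
qed

lemma Aalg_peak_function:
  assumes x: "x \<in> Kset" and e: "e > 0"
  shows "\<exists>f\<in>Aalg. (\<exists>y\<in>Kset - {(0, 1)}. f y \<noteq> 0) \<and> (\<forall>w. e \<le> dist w x \<longrightarrow> f w = 0)"
proof -
  define f where "f = onK (\<lambda>w. of_real ((1 - snd w) * max 0 (e - dist w x)))"
  have "f \<in> Balg"
    unfolding f_def
    by (rule onK_in_Balg) (simp_all add: continuous_intros)
  then have "f \<in> Aalg"
    by (simp add: Aalg_def f_def onK_def)
  obtain z t where xzt: "x = (z, t)"
    by (cases x)
  define y where "y = (z, max 0 (t - e / 2))"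
  have "y \<in> Kset - {(0, 1)}"
    using x e by (auto simp: y_def xzt mem_Kset_iff)
  moreover have "dist y x < e"
    using x e by (auto simp: y_def xzt mem_Kset_iff dist_Pair_Pair dist_real_def)
  then have "f y \<noteq> 0"
    using x e by (auto simp: f_def onK_def y_def xzt mem_Kset_iff)
  moreover have "\<forall>w. e \<le> dist w x \<longrightarrow> f w = 0"
    by (simp add: f_def onK_def)
  ultimately show ?thesis
    using \<open>f \<in> Aalg\<close> by blast
qed

lemma char_space_Aalg_subset_closed_boundary:
  assumes S: "is_boundary Aalg S" "closedin (gelfand_topology Aalg) S"
  shows "char_space Aalg \<subseteq> S"
proof
  let ?K = "Kset - {(0, 1)}" and ?\<chi> = "\<lambda>x. restrict (\<lambda>f. f x) Aalg"
  fix \<phi> assume \<phi>: "\<phi> \<in> char_space Aalg"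
  show "\<phi> \<in> S"
  proof (rule ccontr)
    assume "\<phi> \<notin> S"
    obtain x where x: "x \<in> ?K" "\<phi> = ?\<chi> x"
      using char_space_Aalg_eval[OF \<phi>] by blast
    have "openin (gelfand_topology Aalg) (char_space Aalg - S)"
      using S(2) by (simp add: closedin_def topspace_gelfand_topology[OF Aalg.nonempty])
    then have "openin (top_of_set ?K) {y \<in> ?K. ?\<chi> y \<in> char_space Aalg - S}"
      using openin_continuous_map_preimage[OF continuous_map_eval_gelfand_topology] by (simp only: topspace_euclidean_subtopology)
    moreover have "x \<in> {y \<in> ?K. ?\<chi> y \<in> char_space Aalg - S}"
      using x \<phi> \<open>\<phi> \<notin> S\<close> by simp
    ultimately obtain e where e: "e > 0" and near: "\<And>y. y \<in> ?K \<Longrightarrow> dist y x < e \<Longrightarrow> ?\<chi> y \<notin> S"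
      unfolding openin_euclidean_subtopology_iff by blast
    obtain f y where f: "f \<in> Aalg" and y: "y \<in> ?K" "f y \<noteq> 0"
      and supp: "\<And>w. e \<le> dist w x \<Longrightarrow> f w = 0"
      using Aalg_peak_function[of x e] x e by auto
    have "(SUP \<psi>\<in>S. ereal (cmod (\<psi> f))) = (SUP \<psi>\<in>char_space Aalg. ereal (cmod (\<psi> f)))"
      using S(1) f by (simp add: is_boundary_def)
    then have "ereal (cmod (f y)) \<le> (SUP \<psi>\<in>S. ereal (cmod (\<psi> f)))"
      using SUP_upper[OF eval_in_char_space_Aalg[OF y(1)], of "\<lambda>\<psi>. ereal (cmod (\<psi> f))"] f by simp
    also have "\<dots> \<le> 0"
    proof (rule SUP_least)
      fix \<psi> assume \<psi>: "\<psi> \<in> S"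
      then obtain w where w: "w \<in> ?K" "\<psi> = ?\<chi> w"
        using char_space_Aalg_eval S(1) unfolding is_boundary_def by blast
      then have "f w = 0"
        using near \<psi> supp by (meson not_less)
      then show "ereal (cmod (\<psi> f)) \<le> 0"
        using w f by simp
    qed
    finally have "ereal (cmod (f y)) \<le> 0" .
    with y(2) show False
      by simp
  qed
qed

theorem mainTheorem8:
  shows "char_space Aalg = {restrict (\<lambda>f. f x) Aalg | x. x \<in> Kset - {(0, 1)}}
         \<and> shilov_boundary Aalg = char_space Aalg"
proof
  show "char_space Aalg = {restrict (\<lambda>f. f x) Aalg | x. x \<in> Kset - {(0, 1)}}"
    using char_space_Aalg_eval eval_in_char_space_Aalg by blast
  have "is_boundary Aalg (char_space Aalg)" "closedin (gelfand_topology Aalg) (char_space Aalg)"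
    using closedin_topspace[of "gelfand_topology Aalg"]
    by (simp_all add: is_boundary_def topspace_gelfand_topology[OF Aalg.nonempty])
  then show "shilov_boundary Aalg = char_space Aalg"
    using char_space_Aalg_subset_closed_boundary unfolding shilov_boundary_def by blast
qed

end
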